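(* Let $(G,\precsim)$ be a compatible quasi-ordered abelian group. For every $g\in G$: $g$ is v-type $\Leftrightarrow$ $g\sim-g$ $\Leftrightarrow$ ($0\precsim g$ and $0\precsim -g$). Equivalently: $g$ is o-type $\Leftrightarrow$ ($g\not\sim-g$ or $g=0$) $\Leftrightarrow$ ($g\precsim0$ or $-g\precsim0$).
   Context: A compatible quasi-ordered abelian group is an abelian group $G$ with a total quasi-order $\precsim$ (reflexive, transitive, any two elements comparable) such that, writing $a\sim b$ for $a\precsim b\wedge b\precsim a$: $(Q_1)$ $x\sim0\Rightarrow x=0$; $(Q_2)$ $x\precsim y\wedge y\not\sim z\Rightarrow x+z\precsim y+z$, for all $x,y,z$. Let $cl(g)$ be the $\sim$-class of $g$. An element $g$ is o-type if $cl(g)=\{g\}$ and $g$ is not of order $2$; $g$ is v-type if $\{g\}\subsetneq cl(g)$ or $2g=0$ (so $0$ is both o-type and v-type). *)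

theory Defs
  imports Main
begin

definition qsim :: "('a \<Rightarrow> 'a \<Rightarrow> bool) \<Rightarrow> 'a \<Rightarrow> 'a \<Rightarrow> bool" where
  "qsim qle x y \<longleftrightarrow> qle x y \<and> qle y x"

definition compatible_qoag :: "('a::ab_group_add \<Rightarrow> 'a \<Rightarrow> bool) \<Rightarrow> bool" where
  "compatible_qoag qle \<longleftrightarrow>
     (\<forall>x. qle x x) \<and>
     (\<forall>x y z. qle x y \<and> qle y z \<longrightarrow> qle x z) \<and>
     (\<forall>x y. qle x y \<or> qle y x) \<and>
     (\<forall>x. qsim qle x 0 \<longrightarrow> x = 0) \<and>
     (\<forall>x y z. qle x y \<and> \<not> qsim qle y z \<longrightarrow> qle (x + z) (y + z))"

definition qcl :: "('a \<Rightarrow> 'a \<Rightarrow> bool) \<Rightarrow> 'a \<Rightarrow> 'a set" where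
  "qcl qle g = {h. qsim qle h g}"

definition order_two :: "'a::ab_group_add \<Rightarrow> bool" where
  "order_two g \<longleftrightarrow> g + g = 0 \<and> g \<noteq> 0"

definition o_type :: "('a::ab_group_add \<Rightarrow> 'a \<Rightarrow> bool) \<Rightarrow> 'a \<Rightarrow> bool" where
  "o_type qle g \<longleftrightarrow> qcl qle g = {g} \<and> \<not> order_two g"

definition v_type :: "('a::ab_group_add \<Rightarrow> 'a \<Rightarrow> bool) \<Rightarrow> 'a \<Rightarrow> bool" where
  "v_type qle g \<longleftrightarrow> {g} \<subset> qcl qle g \<or> g + g = 0"

end

theory Submission
  imports Defs
begin

text \<open>Axiom (Q2) with \<open>z = -g\<close> does all the work. If \<open>g \<not>\<sim> -g\<close>, then any \<open>h \<sim> g\<close> is also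
  \<open>\<not>\<sim> -g\<close>, and translating \<open>h \<precsim> g\<close> and \<open>g \<precsim> h\<close> by \<open>-g\<close> squeezes \<open>h - g\<close> into the class
  of \<open>0\<close>, so \<open>cl(g) = {g}\<close> by (Q1). Conversely \<open>g \<sim> -g\<close> puts \<open>-g\<close> into \<open>cl(g)\<close>, which is a second
  element unless \<open>2g = 0\<close>. The characterisation \<open>g \<sim> -g \<longleftrightarrow> 0 \<precsim> g \<and> 0 \<precsim> -g\<close> comes from
  translating \<open>g \<precsim> 0\<close> (resp. \<open>0 \<precsim> g\<close>) by \<open>-g\<close>.\<close>

locale compatible_qoag_rel =
  fixes qle :: "'a::ab_group_add \<Rightarrow> 'a \<Rightarrow> bool"
  assumes compatible: "compatible_qoag qle"
begin

lemma qle_refl: "qle x x"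
  using compatible unfolding compatible_qoag_def by blast

lemma qle_trans: "qle x y \<Longrightarrow> qle y z \<Longrightarrow> qle x z"
  using compatible unfolding compatible_qoag_def by blast

lemma qle_total: "qle x y \<or> qle y x"
  using compatible unfolding compatible_qoag_def by blast

lemma qsim_zero_imp_eq: "qsim qle x 0 \<Longrightarrow> x = 0"
  using compatible unfolding compatible_qoag_def by blast

lemma qle_add_right: "qle x y \<Longrightarrow> \<not> qsim qle y z \<Longrightarrow> qle (x + z) (y + z)"
  using compatible unfolding compatible_qoag_def by blast

lemma qsim_refl: "qsim qle x x"
  unfolding qsim_def using qle_refl by simp

lemma mem_qcl_self: "g \<in> qcl qle g"
  unfolding qcl_def using qsim_refl by simp

lemma qcl_zero: "qcl qle 0 = {0}"
  unfolding qcl_def using qsim_zero_imp_eq qsim_refl by auto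

lemma qsim_neg_iff_nonneg: "qsim qle g (- g) \<longleftrightarrow> qle 0 g \<and> qle 0 (- g)"
proof
  assume s: "qsim qle g (- g)"
  show "qle 0 g \<and> qle 0 (- g)"
  proof (cases "g = 0")
    case True
    then show ?thesis using qle_refl by simp
  next
    case False
    then have "\<not> qsim qle 0 (- g)"
      using qsim_zero_imp_eq[of "- g"] by (auto simp: qsim_def)
    then have "qle g 0 \<Longrightarrow> qle 0 (- g)"
      using qle_add_right[of g 0 "- g"] by simp
    then have "qle 0 g"
      using s qle_total qle_trans unfolding qsim_def by blast
    then show ?thesis
      using s qle_trans unfolding qsim_def by blast
  qed
next
  assume nonneg: "qle 0 g \<and> qle 0 (- g)"
  show "qsim qle g (- g)"
  proof (rule ccontr)
    assume n: "\<not> qsim qle g (- g)"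
    then have "qle (- g) 0"
      using qle_add_right[of 0 g "- g"] nonneg by simp
    then have "g = 0"
      using qsim_zero_imp_eq[of "- g"] nonneg unfolding qsim_def by simp
    then show False
      using n qsim_refl by simp
  qed
qed

lemma qcl_eq_singleton_if_not_qsim_neg:
  assumes n: "\<not> qsim qle g (- g)"
  shows "qcl qle g = {g}"
proof -
  have "h = g" if h: "qsim qle h g" for h
  proof -
    have "\<not> qsim qle h (- g)"
      using n h qle_trans unfolding qsim_def by blast
    then have "qle 0 (h - g)"
      using qle_add_right[of g h "- g"] h by (simp add: qsim_def)
    moreover have "qle (h - g) 0"
      using qle_add_right[of h g "- g"] h n by (simp add: qsim_def)
    ultimately show "h = g"
      using qsim_zero_imp_eq[of "h - g"] unfolding qsim_def by simp
  qed
  then show ?thesis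
    using mem_qcl_self unfolding qcl_def by blast
qed

lemma v_type_iff_qsim_neg: "v_type qle g \<longleftrightarrow> qsim qle g (- g)"
proof
  assume v: "v_type qle g"
  show "qsim qle g (- g)"
  proof (cases "g + g = 0")
    case True
    then have "- g = g"
      by (simp add: add_eq_0_iff)
    then show ?thesis
      using qsim_refl by simp
  next
    case False
    then show ?thesis
      using v qcl_eq_singleton_if_not_qsim_neg unfolding v_type_def by blast
  qed
next
  assume s: "qsim qle g (- g)"
  have "- g \<in> qcl qle g"
    using s unfolding qcl_def qsim_def by simp
  moreover have "- g = g \<Longrightarrow> g + g = 0"
    by (metis add.right_inverse)
  ultimately show "v_type qle g"
    using mem_qcl_self unfolding v_type_def by blast
qed

lemma o_type_iff_not_v_type_or_zero: "o_type qle g \<longleftrightarrow> \<not> v_type qle g \<or> g = 0"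
  using mem_qcl_self qcl_zero unfolding o_type_def v_type_def order_two_def by auto

lemma not_qsim_neg_or_zero_iff: "(\<not> qsim qle g (- g) \<or> g = 0) \<longleftrightarrow> qle g 0 \<or> qle (- g) 0"
proof
  assume "\<not> qsim qle g (- g) \<or> g = 0"
  then show "qle g 0 \<or> qle (- g) 0"
    using qsim_neg_iff_nonneg qle_total qle_refl by blast
next
  assume nonpos: "qle g 0 \<or> qle (- g) 0"
  show "\<not> qsim qle g (- g) \<or> g = 0"
  proof (rule ccontr)
    assume "\<not> (\<not> qsim qle g (- g) \<or> g = 0)"
    then have "qle 0 g" "qle 0 (- g)" and "g \<noteq> 0"
      using qsim_neg_iff_nonneg by auto
    with nonpos show False
      using qsim_zero_imp_eq[of g] qsim_zero_imp_eq[of "- g"] unfolding qsim_def by auto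
  qed
qed

end

theorem mainTheorem4:
  fixes qle :: "'a::ab_group_add \<Rightarrow> 'a \<Rightarrow> bool"
  assumes "compatible_qoag qle"
  shows "\<forall>g. (v_type qle g \<longleftrightarrow> qsim qle g (- g))
           \<and> (qsim qle g (- g) \<longleftrightarrow> qle 0 g \<and> qle 0 (- g))
           \<and> (o_type qle g \<longleftrightarrow> (\<not> qsim qle g (- g) \<or> g = 0))
           \<and> ((\<not> qsim qle g (- g) \<or> g = 0) \<longleftrightarrow> qle g 0 \<or> qle (- g) 0)"
proof -
  interpret compatible_qoag_rel qle
    using assms by unfold_locales
  show ?thesis
    using v_type_iff_qsim_neg qsim_neg_iff_nonneg o_type_iff_not_v_type_or_zero
      not_qsim_neg_or_zero_iff
    by blast
qed

end
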